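(* Let $\gamma:[0,T]\to\mathbb{R}^2$ be a trajectory with continuous second derivatives whose curvature is bounded by $\kappa_{max}>0$. Let $r_1,r_2$ satisfy $\sqrt{2}\, r_1 \leq r_2 < \frac{1}{\kappa_{max}}$. Then for all $x\in\mathbb{R}^2$, $$C_{B_{r_1}}(x) \leq C_{S_{r_1},S_{r_2}}(x) \leq C_{B_{r_2}}(x).$$
   Context: For $r>0$ and $x=(x_1,x_2)\in\mathbb{R}^2$ let $B_r(x)=\{y\in\mathbb{R}^2 : (y_1-x_1)^2+(y_2-x_2)^2\le r^2\}$ (closed disk) and $S_r(x)=\{y\in\mathbb{R}^2:\max(|y_1-x_1|,|y_2-x_2|)\le r\}$ (closed square). For a set $K\subset\mathbb{R}^2$, let $A_K$ be the set of intervals $[a,b]\subset[0,T]$ such that $\gamma([a,b])=\{\gamma(t):t\in[a,b]\}\subset K$ and $[a,b]$ is maximal with this property (no larger interval $[a',b']\subset[0,T]$ containing $[a,b]$ has trace contained in $K$). The local trajectory count function is $C_{B_r}(x)=|A_{B_r(x)}|$ (cardinality). For $r_1<r_2$, define an equivalence relation on $A_{S_{r_1}(x)}$ by $[a_1,b_1]\sim[a_2,b_2]$ if there is an interval $[a,b]\in A_{S_{r_2}(x)}$ with $[a_1,b_1]\cup[a_2,b_2]\subset[a,b]$; the robust local square count function is $C_{S_{r_1},S_{r_2}}(x)=|A_{S_{r_1}(x)}/\!\sim|$, the number of equivalence classes. *)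

theory Defs
  imports "HOL-Analysis.Analysis" "HOL-Library.Extended_Nat"
begin

(* Points of R^2 are pairs of reals; the product norm/dist is Euclidean. *)

definition disk :: "real \<Rightarrow> real \<times> real \<Rightarrow> (real \<times> real) set" where
  "disk r x = {y. (fst y - fst x)^2 + (snd y - snd x)^2 \<le> r^2}"

definition square :: "real \<Rightarrow> real \<times> real \<Rightarrow> (real \<times> real) set" where
  "square r x = {y. max \<bar>fst y - fst x\<bar> \<bar>snd y - snd x\<bar> \<le> r}"

definition trace_in :: "(real \<Rightarrow> real \<times> real) \<Rightarrow> real \<Rightarrow> (real \<times> real) set \<Rightarrow> real \<Rightarrow> real \<Rightarrow> bool" where
  "trace_in \<gamma> T K a b \<longleftrightarrow> 0 \<le> a \<and> a \<le> b \<and> b \<le> T \<and> \<gamma> ` {a..b} \<subseteq> K"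

definition maxint :: "(real \<Rightarrow> real \<times> real) \<Rightarrow> real \<Rightarrow> (real \<times> real) set \<Rightarrow> (real \<times> real) set" where
  "maxint \<gamma> T K = {(a, b). trace_in \<gamma> T K a b \<and>
      (\<forall>a' b'. trace_in \<gamma> T K a' b' \<and> {a..b} \<subseteq> {a'..b'} \<longrightarrow> a' = a \<and> b' = b)}"

definition ecard :: "'a set \<Rightarrow> enat" where
  "ecard A = (if finite A then enat (card A) else \<infinity>)"

definition count_ball :: "(real \<Rightarrow> real \<times> real) \<Rightarrow> real \<Rightarrow> real \<Rightarrow> real \<times> real \<Rightarrow> enat" where
  "count_ball \<gamma> T r x = ecard (maxint \<gamma> T (disk r x))"

definition robust_rel :: "(real \<Rightarrow> real \<times> real) \<Rightarrow> real \<Rightarrow> real \<Rightarrow> real \<Rightarrow> real \<times> real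
    \<Rightarrow> ((real \<times> real) \<times> (real \<times> real)) set" where
  "robust_rel \<gamma> T r1 r2 x = {((a1, b1), (a2, b2)).
      (a1, b1) \<in> maxint \<gamma> T (square r1 x) \<and> (a2, b2) \<in> maxint \<gamma> T (square r1 x) \<and>
      (\<exists>(a, b) \<in> maxint \<gamma> T (square r2 x). {a1..b1} \<union> {a2..b2} \<subseteq> {a..b})}"

definition count_robust_square :: "(real \<Rightarrow> real \<times> real) \<Rightarrow> real \<Rightarrow> real \<Rightarrow> real \<Rightarrow> real \<times> real \<Rightarrow> enat" where
  "count_robust_square \<gamma> T r1 r2 x =
     ecard (maxint \<gamma> T (square r1 x) // robust_rel \<gamma> T r1 r2 x)"

definition curvature :: "(real \<times> real) \<Rightarrow> (real \<times> real) \<Rightarrow> real" where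
  "curvature v w = \<bar>fst v * snd w - snd v * fst w\<bar> / norm v ^ 3"

end

theory Submission
  imports Defs
begin

(* Both inequalities come from injections between sets of maximal intervals. As
   B_r1(x) is contained in S_r1(x), every maximal interval for the disk B_r1(x) lies in one for
   the square S_r1(x); as S_r1(x) is contained in B_r2(x) and B_r2(x) in S_r2(x) (this is where
   sqrt 2 * r1 <= r2 enters), every robust class lies in a maximal interval for B_r2(x). The
   second assignment is injective directly by the definition of the robust relation.

   Injectivity of the first one rests on a geometric fact: an arc of curvature at most kappa that
   stays in the square S_r2(x), r2 < 1/kappa, and starts and ends in a disk B_rho(x), rho <= r2,
   never leaves that disk. At a point of maximal distance from x the second-derivative test
   gives distance at least 1/kappa; comparing the arc with its tangent circles of radius
   1/kappa shows that it then keeps distance at least 1/kappa as long as it stays in the square,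
   so it cannot end in B_rho(x). *)

lemma DERIV_nonneg_imp_le:
  fixes f f' :: "real \<Rightarrow> real"
  assumes "a \<le> b"
    and "\<And>t. t \<in> {a..b} \<Longrightarrow> (f has_real_derivative f' t) (at t within {a..b})"
    and "\<And>t. t \<in> {a..b} \<Longrightarrow> 0 \<le> f' t"
  shows "f a \<le> f b"
proof (rule DERIV_nonneg_imp_increasing_open[OF assms(1)])
  show "continuous_on {a..b} f"
    using assms(2) by (rule DERIV_continuous_on)
  fix t assume "a < t" "t < b"
  then show "\<exists>y. DERIV f t :> y \<and> 0 \<le> y"
    using assms(2)[of t] assms(3)[of t] by (auto simp: at_within_Icc_at)
qed

lemma DERIV_local_max_imp_second_deriv_nonpos:
  fixes f f' :: "real \<Rightarrow> real"
  assumes "a < t" "t < b"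
    and deriv: "\<And>s. a < s \<Longrightarrow> s < b \<Longrightarrow> (f has_real_derivative f' s) (at s)"
    and deriv': "(f' has_real_derivative f'') (at t)"
    and critical: "f' t = 0"
    and max: "\<And>s. a < s \<Longrightarrow> s < b \<Longrightarrow> f s \<le> f t"
  shows "f'' \<le> 0"
proof (rule ccontr)
  assume "\<not> f'' \<le> 0"
  then obtain \<delta> where "0 < \<delta>" and increasing: "\<And>h. 0 < h \<Longrightarrow> h < \<delta> \<Longrightarrow> f' t < f' (t + h)"
    using DERIV_pos_inc_right[OF deriv'] by force
  define h where "h = min \<delta> (b - t) / 2"
  have h: "0 < h" "h < \<delta>" "t + h < b"
    using \<open>0 < \<delta>\<close> \<open>t < b\<close> unfolding h_def by (auto simp: min_def field_simps)
  obtain z where z: "t < z" "z < t + h" and mvt: "f (t + h) - f t = h * f' z"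
    using MVT2[of t "t + h" f f'] h deriv \<open>a < t\<close> by force
  have "f' t < f' (t + (z - t))"
    using z h by (intro increasing) auto
  then have "0 < f (t + h) - f t"
    using mvt h critical by simp
  moreover have "f (t + h) \<le> f t"
    using h \<open>a < t\<close> by (intro max) auto
  ultimately show False by simp
qed

lemma continuous_on_pos_persists:
  fixes f :: "real \<Rightarrow> real"
  assumes cont: "continuous_on {a..b} f" and start: "0 < f a"
    and no_zero: "\<And>s. s \<in> {a..b} \<Longrightarrow> \<forall>u\<in>{a..s}. 0 \<le> f u \<Longrightarrow> f s \<noteq> 0"
    and t: "t \<in> {a..b}"
  shows "0 < f t"
proof (rule ccontr)
  assume "\<not> 0 < f t"
  define Z where "Z = {s \<in> {a..b}. f s = 0}"
  have zero_before: "\<exists>z\<in>Z. z \<le> u" if u: "u \<in> {a..b}" "f u \<le> 0" for u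
  proof -
    have "continuous_on {a..u} f"
      by (rule continuous_on_subset[OF cont]) (use u in auto)
    then obtain z where "a \<le> z" "z \<le> u" "f z = 0"
      using IVT2'[of f u 0 a] start u by auto
    then show ?thesis
      using u(1) by (auto simp: Z_def)
  qed
  have "Z \<noteq> {}"
    using zero_before[OF t] \<open>\<not> 0 < f t\<close> by auto
  moreover have "bdd_below Z"
    by (auto simp: Z_def bdd_below_def)
  moreover have "closed Z"
    unfolding Z_def by (rule continuous_closed_preimage_constant[OF cont closed_atLeastAtMost])
  ultimately have first_zero: "Inf Z \<in> Z"
    by (rule closed_contains_Inf)
  have "\<forall>u\<in>{a..Inf Z}. 0 \<le> f u"
  proof
    fix u assume u: "u \<in> {a..Inf Z}"
    show "0 \<le> f u"
    proof (rule ccontr)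
      assume "\<not> 0 \<le> f u"
      moreover have "u \<in> {a..b}"
        using u first_zero by (auto simp: Z_def)
      ultimately obtain z where "z \<in> Z" "z \<le> u"
        using zero_before by force
      then have "u = Inf Z"
        using u cInf_lower[of z Z] \<open>bdd_below Z\<close> by auto
      then show False
        using first_zero \<open>\<not> 0 \<le> f u\<close> by (simp add: Z_def)
    qed
  qed
  then show False
    using no_zero[of "Inf Z"] first_zero by (auto simp: Z_def)
qed

lemma DERIV_sqrt_sum_squares:
  fixes f g :: "real \<Rightarrow> real"
  assumes "(f has_real_derivative f') (at t within S)" "(g has_real_derivative g') (at t within S)"
    and "0 < f t ^ 2 + g t ^ 2"
  shows "((\<lambda>t. sqrt (f t ^ 2 + g t ^ 2)) has_real_derivative
      (f t * f' + g t * g') / sqrt (f t ^ 2 + g t ^ 2)) (at t within S)"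
  using assms by (auto intro!: derivative_eq_intros simp: divide_simps ring_distribs mult_ac)

lemma has_real_derivative_fst:
  "(f has_vector_derivative v) F \<Longrightarrow> ((\<lambda>t. fst (f t)) has_real_derivative fst v) F"
  unfolding has_real_derivative_iff_has_vector_derivative has_vector_derivative_def
  by (drule has_derivative_fst) simp

lemma has_real_derivative_snd:
  "(f has_vector_derivative v) F \<Longrightarrow> ((\<lambda>t. snd (f t)) has_real_derivative snd v) F"
  unfolding has_real_derivative_iff_has_vector_derivative has_vector_derivative_def
  by (drule has_derivative_snd) simp

text \<open>For a curve \<open>p\<close> with velocity \<open>v\<close> and acceleration \<open>a\<close>, the first and third
  hypotheses say that \<open>|p|\<^sup>2\<close> has vanishing first and nonpositive second derivative.\<close>

lemma inverse_curvature_le_norm_at_max: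
  fixes p1 p2 v1 v2 a1 a2 \<kappa> :: real
  assumes perp: "p1 * v1 + p2 * v2 = 0" and speed: "0 < v1\<^sup>2 + v2\<^sup>2"
    and concave: "v1\<^sup>2 + v2\<^sup>2 + p1 * a1 + p2 * a2 \<le> 0"
    and curvature: "\<bar>v1 * a2 - v2 * a1\<bar> \<le> \<kappa> * sqrt (v1\<^sup>2 + v2\<^sup>2) ^ 3" and "0 < \<kappa>"
  shows "(1 / \<kappa>)\<^sup>2 \<le> p1\<^sup>2 + p2\<^sup>2"
proof -
  define N where "N = v1\<^sup>2 + v2\<^sup>2"
  define q where "q = p2 * v1 - p1 * v2"
  define c where "c = v1 * a2 - v2 * a1"
  have "0 < N" using speed by (simp add: N_def)
  have pa: "(p1 * a1 + p2 * a2) * N = q * c"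
    using perp unfolding N_def q_def c_def by algebra
  have q2: "q\<^sup>2 = (p1\<^sup>2 + p2\<^sup>2) * N"
    using perp unfolding N_def q_def by algebra
  have "N * N \<le> - (p1 * a1 + p2 * a2) * N"
    using concave \<open>0 < N\<close> by (intro mult_right_mono) (auto simp: N_def)
  then have "N * N \<le> - (q * c)"
    unfolding minus_mult_left[symmetric] pa .
  then have "(N * N)\<^sup>2 \<le> q\<^sup>2 * c\<^sup>2"
    using \<open>0 < N\<close> power_mono[of "N * N" "- (q * c)" 2] by (simp add: power_mult_distrib)
  also have "\<dots> \<le> q\<^sup>2 * (\<kappa>\<^sup>2 * N ^ 3)"
  proof (rule mult_left_mono)
    have "c\<^sup>2 \<le> (\<kappa> * sqrt N ^ 3)\<^sup>2"
      using curvature power_mono[of "\<bar>c\<bar>" "\<kappa> * sqrt N ^ 3" 2] by (simp add: c_def N_def)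
    also have "\<dots> = \<kappa>\<^sup>2 * (sqrt N ^ 2) ^ 3"
      by (simp add: power_mult_distrib flip: power_mult)
    also have "\<dots> = \<kappa>\<^sup>2 * N ^ 3"
      using \<open>0 < N\<close> by simp
    finally show "c\<^sup>2 \<le> \<kappa>\<^sup>2 * N ^ 3" .
  qed simp
  also have "\<dots> = ((p1\<^sup>2 + p2\<^sup>2) * \<kappa>\<^sup>2) * (N * N)\<^sup>2"
    unfolding q2 by (simp add: power2_eq_square power3_eq_cube mult_ac)
  finally have "1 \<le> (p1\<^sup>2 + p2\<^sup>2) * \<kappa>\<^sup>2"
    using \<open>0 < N\<close> by (simp add: mult_le_cancel_right1)
  then show ?thesis
    using \<open>0 < \<kappa>\<close> by (simp add: power_divide divide_le_eq)
qed

lemma circle_comparison_slope: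
  fixes u v w s n R :: real
  assumes "0 < R" "0 < v" "0 \<le> w" "0 < s" "s\<^sup>2 = R\<^sup>2 - w\<^sup>2" "n\<^sup>2 = u\<^sup>2 + v\<^sup>2"
    and "- (w * n) / R \<le> u"
  shows "0 \<le> u + w * v / s"
proof (cases "0 \<le> u")
  case False
  have "- u * R \<le> w * n"
    using assms(7) \<open>0 < R\<close> by (simp add: field_simps)
  then have "(- u * R)\<^sup>2 \<le> (w * n)\<^sup>2"
    using False \<open>0 < R\<close> by (intro power_mono[where n = 2] mult_nonneg_nonneg) simp_all
  have "(- u * s)\<^sup>2 = u\<^sup>2 * R\<^sup>2 - u\<^sup>2 * w\<^sup>2"
    by (simp add: power_mult_distrib assms(5) right_diff_distrib)
  also have "\<dots> \<le> (w * n)\<^sup>2 - u\<^sup>2 * w\<^sup>2"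
    using \<open>(- u * R)\<^sup>2 \<le> (w * n)\<^sup>2\<close> by (simp add: power_mult_distrib)
  also have "\<dots> = (w * v)\<^sup>2"
    by (simp add: power_mult_distrib assms(6) distrib_left)
  finally have "(- u * s)\<^sup>2 \<le> (w * v)\<^sup>2" .
  then have "- u * s \<le> w * v"
    by (rule power2_le_imp_le) (use assms(2,3) in simp)
  then show ?thesis
    using \<open>0 < s\<close> by (simp add: field_simps)
qed (use assms in simp)

locale curvature_bounded_arc =
  fixes X Y X' Y' X'' Y'' :: "real \<Rightarrow> real" and t0 t1 \<kappa> :: real
  assumes ordered: "t0 \<le> t1"
    and deriv_X: "\<And>t. t \<in> {t0..t1} \<Longrightarrow> (X has_real_derivative X' t) (at t within {t0..t1})"
    and deriv_Y: "\<And>t. t \<in> {t0..t1} \<Longrightarrow> (Y has_real_derivative Y' t) (at t within {t0..t1})"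
    and deriv_X': "\<And>t. t \<in> {t0..t1} \<Longrightarrow> (X' has_real_derivative X'' t) (at t within {t0..t1})"
    and deriv_Y': "\<And>t. t \<in> {t0..t1} \<Longrightarrow> (Y' has_real_derivative Y'' t) (at t within {t0..t1})"
    and speed_pos: "\<And>t. t \<in> {t0..t1} \<Longrightarrow> 0 < X' t ^ 2 + Y' t ^ 2"
    and curvature_le: "\<And>t. t \<in> {t0..t1} \<Longrightarrow>
      \<bar>X' t * Y'' t - Y' t * X'' t\<bar> \<le> \<kappa> * sqrt (X' t ^ 2 + Y' t ^ 2) ^ 3"
    and curvature_pos: "0 < \<kappa>"
begin

lemma subarc:
  assumes "t0 \<le> s0" "s0 \<le> s1" "s1 \<le> t1"
  shows "curvature_bounded_arc X Y X' Y' X'' Y'' s0 s1 \<kappa>"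
proof
  have sub: "{s0..s1} \<subseteq> {t0..t1}"
    using assms by auto
  fix t assume "t \<in> {s0..s1}"
  then have t: "t \<in> {t0..t1}"
    using sub by auto
  show "(X has_real_derivative X' t) (at t within {s0..s1})"
    by (rule DERIV_subset[OF deriv_X[OF t] sub])
  show "(Y has_real_derivative Y' t) (at t within {s0..s1})"
    by (rule DERIV_subset[OF deriv_Y[OF t] sub])
  show "(X' has_real_derivative X'' t) (at t within {s0..s1})"
    by (rule DERIV_subset[OF deriv_X'[OF t] sub])
  show "(Y' has_real_derivative Y'' t) (at t within {s0..s1})"
    by (rule DERIV_subset[OF deriv_Y'[OF t] sub])
  show "0 < X' t ^ 2 + Y' t ^ 2"
    by (rule speed_pos[OF t])
  show "\<bar>X' t * Y'' t - Y' t * X'' t\<bar> \<le> \<kappa> * sqrt (X' t ^ 2 + Y' t ^ 2) ^ 3"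
    by (rule curvature_le[OF t])
qed (use assms curvature_pos in auto)

lemma reflect:
  assumes "\<bar>\<sigma>\<^sub>1\<bar> = 1" "\<bar>\<sigma>\<^sub>2\<bar> = 1"
  shows "curvature_bounded_arc (\<lambda>t. \<sigma>\<^sub>1 * X t) (\<lambda>t. \<sigma>\<^sub>2 * Y t) (\<lambda>t. \<sigma>\<^sub>1 * X' t) (\<lambda>t. \<sigma>\<^sub>2 * Y' t)
    (\<lambda>t. \<sigma>\<^sub>1 * X'' t) (\<lambda>t. \<sigma>\<^sub>2 * Y'' t) t0 t1 \<kappa>"
proof
  have "\<sigma>\<^sub>1\<^sup>2 = 1" "\<sigma>\<^sub>2\<^sup>2 = 1"
    using assms by (metis power2_abs power_one)+
  then have squares: "(\<sigma>\<^sub>1 * u)\<^sup>2 = u\<^sup>2" "(\<sigma>\<^sub>2 * u)\<^sup>2 = u\<^sup>2" for u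
    by (simp_all add: power_mult_distrib)
  fix t assume t: "t \<in> {t0..t1}"
  show "((\<lambda>t. \<sigma>\<^sub>1 * X t) has_real_derivative \<sigma>\<^sub>1 * X' t) (at t within {t0..t1})"
    by (rule DERIV_cmult[OF deriv_X[OF t]])
  show "((\<lambda>t. \<sigma>\<^sub>2 * Y t) has_real_derivative \<sigma>\<^sub>2 * Y' t) (at t within {t0..t1})"
    by (rule DERIV_cmult[OF deriv_Y[OF t]])
  show "((\<lambda>t. \<sigma>\<^sub>1 * X' t) has_real_derivative \<sigma>\<^sub>1 * X'' t) (at t within {t0..t1})"
    by (rule DERIV_cmult[OF deriv_X'[OF t]])
  show "((\<lambda>t. \<sigma>\<^sub>2 * Y' t) has_real_derivative \<sigma>\<^sub>2 * Y'' t) (at t within {t0..t1})"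
    by (rule DERIV_cmult[OF deriv_Y'[OF t]])
  show "0 < (\<sigma>\<^sub>1 * X' t)\<^sup>2 + (\<sigma>\<^sub>2 * Y' t)\<^sup>2"
    using speed_pos[OF t] by (simp add: squares)
  have "\<bar>\<sigma>\<^sub>1 * X' t * (\<sigma>\<^sub>2 * Y'' t) - \<sigma>\<^sub>2 * Y' t * (\<sigma>\<^sub>1 * X'' t)\<bar>
      = \<bar>\<sigma>\<^sub>1 * \<sigma>\<^sub>2\<bar> * \<bar>X' t * Y'' t - Y' t * X'' t\<bar>"
    by (simp add: abs_mult[symmetric] algebra_simps)
  then show "\<bar>\<sigma>\<^sub>1 * X' t * (\<sigma>\<^sub>2 * Y'' t) - \<sigma>\<^sub>2 * Y' t * (\<sigma>\<^sub>1 * X'' t)\<bar>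
      \<le> \<kappa> * sqrt ((\<sigma>\<^sub>1 * X' t)\<^sup>2 + (\<sigma>\<^sub>2 * Y' t)\<^sup>2) ^ 3"
    using curvature_le[OF t] assms by (simp add: squares abs_mult)
qed (rule ordered curvature_pos)+

lemma swap: "curvature_bounded_arc Y X Y' X' Y'' X'' t0 t1 \<kappa>"
proof
  fix t assume t: "t \<in> {t0..t1}"
  show "0 < Y' t ^ 2 + X' t ^ 2"
    using speed_pos[OF t] by (simp add: add.commute)
  have "\<bar>Y' t * X'' t - X' t * Y'' t\<bar> = \<bar>X' t * Y'' t - Y' t * X'' t\<bar>"
    by (rule abs_minus_commute)
  then show "\<bar>Y' t * X'' t - X' t * Y'' t\<bar> \<le> \<kappa> * sqrt (Y' t ^ 2 + X' t ^ 2) ^ 3"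
    using curvature_le[OF t] by (simp add: add.commute)
qed (use ordered deriv_X deriv_Y deriv_X' deriv_Y' curvature_pos in auto)

text \<open>For \<open>\<sigma> = 1\<close> (resp. \<open>\<sigma> = -1\<close>) the ordinate of the centre of the circle of radius
  \<open>1 / \<kappa>\<close> touching the arc at time \<open>t\<close> from its left (resp. right).\<close>

definition normal_center_y :: "real \<Rightarrow> real \<Rightarrow> real" where
  "normal_center_y \<sigma> t = Y t + \<sigma> * X' t / (\<kappa> * sqrt (X' t ^ 2 + Y' t ^ 2))"

lemma has_deriv_normal_center_y:
  assumes t: "t \<in> {t0..t1}"
  shows "(normal_center_y \<sigma> has_real_derivative
      Y' t * (1 + \<sigma> * (X'' t * Y' t - X' t * Y'' t) / (\<kappa> * sqrt (X' t ^ 2 + Y' t ^ 2) ^ 3)))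
      (at t within {t0..t1})"
proof -
  define n where "n = sqrt (X' t ^ 2 + Y' t ^ 2)"
  have n: "0 < n" "n\<^sup>2 = X' t ^ 2 + Y' t ^ 2"
    using speed_pos[OF t] by (auto simp: n_def)
  have "(normal_center_y \<sigma> has_real_derivative
      Y' t + (\<sigma> * X'' t * (\<kappa> * n) - \<sigma> * X' t * (\<kappa> * ((X' t * X'' t + Y' t * Y'' t) / n)))
        / (\<kappa> * n * (\<kappa> * n))) (at t within {t0..t1})"
    unfolding normal_center_y_def[abs_def] n_def using speed_pos[OF t] curvature_pos
    by (intro DERIV_add DERIV_divide DERIV_cmult DERIV_sqrt_sum_squares deriv_X' deriv_Y' deriv_Y t) auto
  moreover have "X'' t * n\<^sup>2 - X' t * (X' t * X'' t + Y' t * Y'' t) = Y' t * (X'' t * Y' t - X' t * Y'' t)"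
    using n(2) by (simp add: algebra_simps power2_eq_square)
  moreover have "(\<sigma> * X'' t * (\<kappa> * n) - \<sigma> * X' t * (\<kappa> * ((X' t * X'' t + Y' t * Y'' t) / n)))
        / (\<kappa> * n * (\<kappa> * n))
      = \<sigma> * (X'' t * n\<^sup>2 - X' t * (X' t * X'' t + Y' t * Y'' t)) / (\<kappa> * n ^ 3)"
    using n(1) curvature_pos by (simp add: field_simps power2_eq_square power3_eq_cube)
  ultimately show ?thesis
    unfolding n_def[symmetric] by (simp add: algebra_simps)
qed

text \<open>While the arc rises, the tangent circles of radius \<open>1 / \<kappa>\<close> cannot move down,
  because the curvature of the arc is at most that of the circles.\<close>

lemma normal_center_y_mono:
  assumes "\<bar>\<sigma>\<bar> = 1" "t0 \<le> s" "s \<le> t1" and rising: "\<And>t. t \<in> {t0..s} \<Longrightarrow> 0 \<le> Y' t"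
  shows "normal_center_y \<sigma> t0 \<le> normal_center_y \<sigma> s"
proof (rule DERIV_nonneg_imp_le[OF \<open>t0 \<le> s\<close>])
  fix t assume t: "t \<in> {t0..s}"
  then have t': "t \<in> {t0..t1}"
    using \<open>s \<le> t1\<close> by auto
  define n where "n = sqrt (X' t ^ 2 + Y' t ^ 2)"
  show "(normal_center_y \<sigma> has_real_derivative
      Y' t * (1 + \<sigma> * (X'' t * Y' t - X' t * Y'' t) / (\<kappa> * n ^ 3))) (at t within {t0..s})"
    unfolding n_def by (rule DERIV_subset[OF has_deriv_normal_center_y[OF t']]) (use \<open>s \<le> t1\<close> in auto)
  have "0 < \<kappa> * n ^ 3"
    using speed_pos[OF t'] curvature_pos by (simp add: n_def)
  moreover have "\<bar>\<sigma> * (X'' t * Y' t - X' t * Y'' t)\<bar> \<le> \<kappa> * n ^ 3"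
    using curvature_le[OF t'] assms(1) by (simp add: abs_mult n_def abs_minus_commute mult.commute)
  ultimately have "\<bar>\<sigma> * (X'' t * Y' t - X' t * Y'' t) / (\<kappa> * n ^ 3)\<bar> \<le> 1"
    by (simp add: abs_divide divide_le_eq)
  then have "0 \<le> 1 + \<sigma> * (X'' t * Y' t - X' t * Y'' t) / (\<kappa> * n ^ 3)"
    by (simp only: abs_le_iff) linarith
  then show "0 \<le> Y' t * (1 + \<sigma> * (X'' t * Y' t - X' t * Y'' t) / (\<kappa> * n ^ 3))"
    using rising[OF t] by simp
qed

end

text \<open>The situation at a point of maximal distance from the origin, normalised by reflecting and
  swapping the axes: the point lies in the closed first quadrant and the arc moves upwards there.\<close>

locale far_rising_arc = curvature_bounded_arc +
  fixes r :: real
  assumes radius_lt: "r * \<kappa> < 1"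
    and in_square: "\<And>t. t \<in> {t0..t1} \<Longrightarrow> \<bar>X t\<bar> \<le> r \<and> \<bar>Y t\<bar> \<le> r"
    and start_quadrant: "0 \<le> X t0" "0 \<le> Y t0"
    and start_perp: "X t0 * X' t0 + Y t0 * Y' t0 = 0"
    and start_rising: "0 < Y' t0"
    and start_far: "(1 / \<kappa>)\<^sup>2 \<le> X t0 ^ 2 + Y t0 ^ 2"
begin

lemma r_lt_inverse_curvature: "r < 1 / \<kappa>"
  using radius_lt curvature_pos by (simp add: field_simps)

lemma start_dist: "1 / \<kappa> \<le> sqrt (X t0 ^ 2 + Y t0 ^ 2)"
  using start_far by (rule real_le_rsqrt)

lemma start_X_pos: "0 < X t0"
proof -
  have "\<bar>Y t0\<bar> < 1 / \<kappa>"
    using in_square[of t0] ordered r_lt_inverse_curvature by auto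
  then have "Y t0 ^ 2 < (1 / \<kappa>)\<^sup>2"
    by (metis abs_ge_zero power2_abs power_strict_mono zero_less_numeral)
  then have "0 < X t0 ^ 2"
    using start_far by linarith
  then show ?thesis
    using start_quadrant(1) by (cases "X t0 = 0") auto
qed

lemma normal_center_y_start:
  "normal_center_y \<sigma> t0 = Y t0 - \<sigma> * Y t0 / (\<kappa> * sqrt (X t0 ^ 2 + Y t0 ^ 2))"
proof -
  define d where "d = sqrt (X t0 ^ 2 + Y t0 ^ 2)"
  define n where "n = sqrt (X' t0 ^ 2 + Y' t0 ^ 2)"
  have "0 < d"
    using start_dist curvature_pos unfolding d_def
    by (metis divide_pos_pos order_less_le_trans zero_less_one)
  have X': "X' t0 = - Y t0 * Y' t0 / X t0"
    using start_perp start_X_pos by (simp add: field_simps)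
  have "(Y' t0 * d / X t0)\<^sup>2 = X' t0 ^ 2 + Y' t0 ^ 2"
    unfolding X' d_def using start_X_pos by (simp add: field_simps power2_eq_square)
  moreover have "0 \<le> Y' t0 * d / X t0"
    using start_rising \<open>0 < d\<close> start_X_pos by simp
  ultimately have "n = Y' t0 * d / X t0"
    unfolding n_def by (metis real_sqrt_unique)
  then have "X' t0 = - Y t0 * n / d"
    unfolding X' using \<open>0 < d\<close> start_X_pos by (simp add: field_simps)
  moreover have "0 < n"
    using speed_pos[of t0] ordered by (simp add: n_def)
  ultimately show ?thesis
    unfolding normal_center_y_def n_def[symmetric] d_def[symmetric]
    using \<open>0 < d\<close> curvature_pos by (simp add: field_simps)
qed

lemma normal_center_y_start_nonneg:
  assumes "\<bar>\<sigma>\<bar> = 1"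
  shows "0 \<le> normal_center_y \<sigma> t0"
proof -
  define d where "d = sqrt (X t0 ^ 2 + Y t0 ^ 2)"
  have "1 \<le> \<kappa> * d"
    using start_dist curvature_pos unfolding d_def by (simp add: field_simps)
  then have "Y t0 \<le> Y t0 * (\<kappa> * d)"
    using mult_left_mono[OF _ start_quadrant(2)] by fastforce
  then have "\<sigma> * Y t0 / (\<kappa> * d) \<le> Y t0"
    using assms start_quadrant(2) \<open>1 \<le> \<kappa> * d\<close> by (auto simp: divide_le_eq abs_if split: if_splits)
  then show ?thesis
    unfolding normal_center_y_start d_def[symmetric] by simp
qed

lemma rising:
  assumes "t \<in> {t0..t1}"
  shows "0 < Y' t"
proof (rule continuous_on_pos_persists[OF DERIV_continuous_on[OF deriv_Y'] start_rising _ assms])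
  fix s assume s: "s \<in> {t0..t1}" and nonneg: "\<forall>u\<in>{t0..s}. 0 \<le> Y' u"
  show "Y' s \<noteq> 0"
  proof
    assume flat: "Y' s = 0"
    then have "X' s \<noteq> 0"
      using speed_pos[OF s] by auto
    define \<sigma> where "\<sigma> = - sgn (X' s)"
    have "\<bar>\<sigma>\<bar> = 1"
      using \<open>X' s \<noteq> 0\<close> by (simp add: \<sigma>_def sgn_if)
    have "normal_center_y \<sigma> s = Y s - 1 / \<kappa>"
      using \<open>X' s \<noteq> 0\<close> flat curvature_pos by (simp add: normal_center_y_def \<sigma>_def sgn_if)
    also have "\<dots> < 0"
      using in_square[OF s] r_lt_inverse_curvature by auto
    also have "0 \<le> normal_center_y \<sigma> t0"
      using \<open>\<bar>\<sigma>\<bar> = 1\<close> by (rule normal_center_y_start_nonneg)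
    also have "\<dots> \<le> normal_center_y \<sigma> s"
      using \<open>\<bar>\<sigma>\<bar> = 1\<close> s nonneg by (intro normal_center_y_mono) auto
    finally show False
      by simp
  qed
qed

text \<open>The centre of the circle of radius \<open>1 / \<kappa>\<close> touching the arc at its start point \<open>p\<close>
  from the left; it lies on the segment from the origin to \<open>p\<close>.\<close>

definition start_center_x :: real where
  "start_center_x = X t0 - X t0 / (\<kappa> * sqrt (X t0 ^ 2 + Y t0 ^ 2))"

lemma start_center_x_nonneg: "0 \<le> start_center_x"
proof -
  define d where "d = sqrt (X t0 ^ 2 + Y t0 ^ 2)"
  have "1 \<le> \<kappa> * d"
    using start_dist curvature_pos unfolding d_def by (simp add: field_simps)
  then have "X t0 \<le> X t0 * (\<kappa> * d)"
    using mult_left_mono[OF _ start_quadrant(1)] by fastforce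
  then show ?thesis
    using \<open>1 \<le> \<kappa> * d\<close> by (simp add: start_center_x_def d_def[symmetric] divide_le_eq)
qed

lemma height_above_start_center:
  assumes t: "t \<in> {t0..t1}"
  shows "0 \<le> Y t - normal_center_y 1 t0" "Y t - normal_center_y 1 t0 < 1 / \<kappa>"
proof -
  have "Y t0 \<le> Y t"
  proof (rule DERIV_nonneg_imp_le[of t0 t Y Y'])
    fix u assume "u \<in> {t0..t}"
    then show "(Y has_real_derivative Y' u) (at u within {t0..t})" "0 \<le> Y' u"
      using t DERIV_subset[OF deriv_Y] rising by (auto intro: less_imp_le)
  qed (use t in simp)
  moreover have "0 \<le> Y t0 / (\<kappa> * sqrt (X t0 ^ 2 + Y t0 ^ 2))"
    using start_quadrant(2) curvature_pos by simp
  ultimately show "0 \<le> Y t - normal_center_y 1 t0"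
    by (simp add: normal_center_y_start)
  show "Y t - normal_center_y 1 t0 < 1 / \<kappa>"
    using in_square[OF t] r_lt_inverse_curvature normal_center_y_start_nonneg[of 1] by auto
qed

text \<open>Comparing slopes, the rising arc stays to the right of the circle touching it at the start.\<close>

lemma right_of_start_circle:
  "start_center_x + sqrt ((1 / \<kappa>)\<^sup>2 - (Y t1 - normal_center_y 1 t0)\<^sup>2) \<le> X t1"
proof -
  define R Q where "R = 1 / \<kappa>" and "Q = normal_center_y 1 t0"
  have "0 < R"
    using curvature_pos by (simp add: R_def)
  define D where "D t = X t - start_center_x - sqrt (R\<^sup>2 - (Y t - Q)\<^sup>2)" for t
  have "D t0 \<le> D t1"
  proof (rule DERIV_nonneg_imp_le[OF ordered])
    fix t assume t: "t \<in> {t0..t1}"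
    define w where "w = Y t - Q"
    define s where "s = sqrt (R\<^sup>2 - w\<^sup>2)"
    define n where "n = sqrt (X' t ^ 2 + Y' t ^ 2)"
    have "0 \<le> w" "w\<^sup>2 < R\<^sup>2"
      using height_above_start_center[OF t] by (simp_all add: w_def Q_def R_def power_strict_mono)
    then show "(D has_real_derivative X' t + w * Y' t / s) (at t within {t0..t1})"
      unfolding D_def w_def s_def using deriv_X[OF t] deriv_Y[OF t]
      by (auto intro!: derivative_eq_intros simp: divide_simps)
    have "0 < s" "s\<^sup>2 = R\<^sup>2 - w\<^sup>2"
      using \<open>w\<^sup>2 < R\<^sup>2\<close> by (simp_all add: s_def)
    have "0 < n" "n\<^sup>2 = X' t ^ 2 + Y' t ^ 2"
      using speed_pos[OF t] by (simp_all add: n_def)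
    have "Q \<le> normal_center_y 1 t"
      unfolding Q_def using t rising by (intro normal_center_y_mono) (auto intro: less_imp_le)
    then have "- (w * n) / R \<le> X' t"
      using \<open>0 < n\<close> \<open>0 < R\<close>
      by (simp add: normal_center_y_def w_def R_def n_def[symmetric] field_simps)
    then show "0 \<le> X' t + w * Y' t / s"
      by (rule circle_comparison_slope[OF \<open>0 < R\<close> rising[OF t] \<open>0 \<le> w\<close> \<open>0 < s\<close>
            \<open>s\<^sup>2 = R\<^sup>2 - w\<^sup>2\<close> \<open>n\<^sup>2 = X' t ^ 2 + Y' t ^ 2\<close>])
  qed
  moreover have "D t0 = 0"
  proof -
    define d where "d = sqrt (X t0 ^ 2 + Y t0 ^ 2)"
    have "0 < d"
      using start_dist curvature_pos unfolding d_def
      by (metis divide_pos_pos order_less_le_trans zero_less_one)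
    have "R\<^sup>2 - (R * Y t0 / d)\<^sup>2 = R\<^sup>2 * (d\<^sup>2 - Y t0 ^ 2) / d\<^sup>2"
      using \<open>0 < d\<close> by (simp add: power_divide power_mult_distrib field_simps)
    also have "\<dots> = (R * X t0 / d)\<^sup>2"
      by (simp add: d_def power_divide power_mult_distrib)
    finally have "sqrt (R\<^sup>2 - (R * Y t0 / d)\<^sup>2) = R * X t0 / d"
      using \<open>0 < R\<close> \<open>0 < d\<close> start_quadrant(1) by simp
    then show ?thesis
      by (simp add: D_def start_center_x_def Q_def normal_center_y_start R_def d_def[symmetric])
  qed
  ultimately show ?thesis
    by (simp add: D_def R_def Q_def)
qed

lemma far_at_end: "(1 / \<kappa>)\<^sup>2 \<le> X t1 ^ 2 + Y t1 ^ 2"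
proof -
  define w where "w = Y t1 - normal_center_y 1 t0"
  have "0 \<le> w" "w\<^sup>2 < (1 / \<kappa>)\<^sup>2"
    using height_above_start_center[of t1] ordered by (simp_all add: w_def power_strict_mono)
  have "sqrt ((1 / \<kappa>)\<^sup>2 - w\<^sup>2) \<le> X t1"
    using right_of_start_circle start_center_x_nonneg by (simp add: w_def)
  then have "(1 / \<kappa>)\<^sup>2 - w\<^sup>2 \<le> X t1 ^ 2"
    using \<open>w\<^sup>2 < (1 / \<kappa>)\<^sup>2\<close>
    by (metis less_eq_real_def diff_ge_0_iff_ge power_mono real_sqrt_ge_zero real_sqrt_pow2)
  moreover have "w\<^sup>2 \<le> Y t1 ^ 2"
    by (rule power_mono) (use \<open>0 \<le> w\<close> normal_center_y_start_nonneg[of 1] in \<open>auto simp: w_def\<close>)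
  ultimately show ?thesis
    by simp
qed

end

context curvature_bounded_arc
begin

lemma far_stays_far_reflected:
  assumes signs: "\<bar>\<sigma>\<^sub>1\<bar> = 1" "\<bar>\<sigma>\<^sub>2\<bar> = 1" and radius_lt: "r * \<kappa> < 1"
    and in_square: "\<And>t. t \<in> {t0..t1} \<Longrightarrow> \<bar>X t\<bar> \<le> r \<and> \<bar>Y t\<bar> \<le> r"
    and quadrant: "0 \<le> \<sigma>\<^sub>1 * X t0" "0 \<le> \<sigma>\<^sub>2 * Y t0"
    and perp: "X t0 * X' t0 + Y t0 * Y' t0 = 0"
    and rising: "0 < \<sigma>\<^sub>2 * Y' t0"
    and far: "(1 / \<kappa>)\<^sup>2 \<le> X t0 ^ 2 + Y t0 ^ 2"
  shows "(1 / \<kappa>)\<^sup>2 \<le> X t1 ^ 2 + Y t1 ^ 2"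
proof -
  have squares: "(\<sigma>\<^sub>1 * u)\<^sup>2 = u\<^sup>2" "(\<sigma>\<^sub>2 * u)\<^sup>2 = u\<^sup>2" "\<sigma>\<^sub>1 * u * (\<sigma>\<^sub>1 * v) = u * v" "\<sigma>\<^sub>2 * u * (\<sigma>\<^sub>2 * v) = u * v"
    for u v
    using signs by (auto simp: power_mult_distrib abs_if split: if_splits)
  have "far_rising_arc (\<lambda>t. \<sigma>\<^sub>1 * X t) (\<lambda>t. \<sigma>\<^sub>2 * Y t) (\<lambda>t. \<sigma>\<^sub>1 * X' t) (\<lambda>t. \<sigma>\<^sub>2 * Y' t)
      (\<lambda>t. \<sigma>\<^sub>1 * X'' t) (\<lambda>t. \<sigma>\<^sub>2 * Y'' t) t0 t1 \<kappa> r"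
  proof (intro far_rising_arc.intro reflect far_rising_arc_axioms.intro)
    show "\<sigma>\<^sub>1 * X t0 * (\<sigma>\<^sub>1 * X' t0) + \<sigma>\<^sub>2 * Y t0 * (\<sigma>\<^sub>2 * Y' t0) = 0"
      unfolding squares(3,4) by (rule perp)
    show "(1 / \<kappa>)\<^sup>2 \<le> (\<sigma>\<^sub>1 * X t0)\<^sup>2 + (\<sigma>\<^sub>2 * Y t0)\<^sup>2"
      unfolding squares(1,2) by (rule far)
    fix t assume "t \<in> {t0..t1}"
    then show "\<bar>\<sigma>\<^sub>1 * X t\<bar> \<le> r \<and> \<bar>\<sigma>\<^sub>2 * Y t\<bar> \<le> r"
      using in_square signs by (simp add: abs_mult)
  qed (fact signs radius_lt quadrant rising)+
  from far_rising_arc.far_at_end[OF this] show ?thesis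
    by (simp only: squares)
qed

lemma far_point_stays_far:
  assumes radius_lt: "r * \<kappa> < 1"
    and in_square: "\<And>t. t \<in> {t0..t1} \<Longrightarrow> \<bar>X t\<bar> \<le> r \<and> \<bar>Y t\<bar> \<le> r"
    and perp: "X t0 * X' t0 + Y t0 * Y' t0 = 0"
    and far: "(1 / \<kappa>)\<^sup>2 \<le> X t0 ^ 2 + Y t0 ^ 2"
  shows "(1 / \<kappa>)\<^sup>2 \<le> X t1 ^ 2 + Y t1 ^ 2"
proof -
  have "r < 1 / \<kappa>"
    using radius_lt curvature_pos by (simp add: field_simps)
  then have "\<bar>X t0\<bar> < 1 / \<kappa>" "\<bar>Y t0\<bar> < 1 / \<kappa>"
    using in_square[of t0] ordered by fastforce+
  then have "X t0 ^ 2 < (1 / \<kappa>)\<^sup>2" "Y t0 ^ 2 < (1 / \<kappa>)\<^sup>2"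
    by (metis abs_ge_zero power2_abs power_strict_mono zero_less_numeral)+
  then have "X t0 \<noteq> 0" "Y t0 \<noteq> 0"
    using far by auto
  define \<sigma>\<^sub>1 \<sigma>\<^sub>2 where "\<sigma>\<^sub>1 = sgn (X t0)" and "\<sigma>\<^sub>2 = sgn (Y t0)"
  have signs: "\<bar>\<sigma>\<^sub>1\<bar> = 1" "\<bar>\<sigma>\<^sub>2\<bar> = 1" "0 \<le> \<sigma>\<^sub>1 * X t0" "0 \<le> \<sigma>\<^sub>2 * Y t0"
    using \<open>X t0 \<noteq> 0\<close> \<open>Y t0 \<noteq> 0\<close> by (auto simp: \<sigma>\<^sub>1_def \<sigma>\<^sub>2_def sgn_if)
  have "0 < \<sigma>\<^sub>2 * Y' t0 \<or> 0 < \<sigma>\<^sub>1 * X' t0"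
  proof (rule disjCI)
    assume "\<not> 0 < \<sigma>\<^sub>1 * X' t0"
    then have "X t0 * X' t0 \<le> 0"
      using \<open>X t0 \<noteq> 0\<close>
      by (auto simp: \<sigma>\<^sub>1_def sgn_if split: if_splits intro: mult_nonneg_nonpos mult_nonpos_nonneg)
    moreover have "Y' t0 \<noteq> 0"
      using perp speed_pos[of t0] ordered \<open>X t0 \<noteq> 0\<close> by auto
    ultimately have "0 < Y t0 * Y' t0"
      using perp \<open>Y t0 \<noteq> 0\<close> by (metis add.commute add_le_same_cancel1 less_eq_real_def mult_eq_0_iff)
    then show "0 < \<sigma>\<^sub>2 * Y' t0"
      by (auto simp: \<sigma>\<^sub>2_def sgn_if zero_less_mult_iff)
  qed
  then show ?thesis
  proof
    assume "0 < \<sigma>\<^sub>2 * Y' t0"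
    from far_stays_far_reflected[OF signs(1,2) radius_lt in_square signs(3,4) perp this far]
    show ?thesis .
  next
    assume "0 < \<sigma>\<^sub>1 * X' t0"
    have "(1 / \<kappa>)\<^sup>2 \<le> Y t1 ^ 2 + X t1 ^ 2"
    proof (rule curvature_bounded_arc.far_stays_far_reflected[OF swap signs(2,1) radius_lt])
      show "\<bar>Y t\<bar> \<le> r \<and> \<bar>X t\<bar> \<le> r" if "t \<in> {t0..t1}" for t
        using in_square[OF that] by simp
      show "Y t0 * Y' t0 + X t0 * X' t0 = 0"
        using perp by linarith
      show "(1 / \<kappa>)\<^sup>2 \<le> Y t0 ^ 2 + X t0 ^ 2"
        using far by linarith
    qed (fact signs(3,4) \<open>0 < \<sigma>\<^sub>1 * X' t0\<close>)+
    then show ?thesis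
      by linarith
  qed
qed

lemma interior_max_dist_ge_radius:
  assumes "t0 < tm" "tm < t1"
    and max: "\<And>t. t \<in> {t0..t1} \<Longrightarrow> X t ^ 2 + Y t ^ 2 \<le> X tm ^ 2 + Y tm ^ 2"
  shows "X tm * X' tm + Y tm * Y' tm = 0" and "(1 / \<kappa>)\<^sup>2 \<le> X tm ^ 2 + Y tm ^ 2"
proof -
  have interior: "t \<in> {t0..t1}" "at t within {t0..t1} = at t" if "t0 < t" "t < t1" for t
    using that by (auto simp: at_within_Icc_at)
  have deriv: "((\<lambda>t. X t ^ 2 + Y t ^ 2) has_real_derivative 2 * (X t * X' t + Y t * Y' t)) (at t)"
    if "t0 < t" "t < t1" for t
    using deriv_X[OF interior(1)[OF that]] deriv_Y[OF interior(1)[OF that]] interior(2)[OF that]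
    by (auto intro!: derivative_eq_intros simp: algebra_simps)
  have deriv': "((\<lambda>t. 2 * (X t * X' t + Y t * Y' t)) has_real_derivative
      2 * (X' tm * X' tm + X tm * X'' tm + (Y' tm * Y' tm + Y tm * Y'' tm))) (at tm)"
    using deriv_X[OF interior(1)] deriv_Y[OF interior(1)] deriv_X'[OF interior(1)] deriv_Y'[OF interior(1)]
      interior(2) assms(1,2)
    by (auto intro!: derivative_eq_intros simp: algebra_simps)
  have "2 * (X tm * X' tm + Y tm * Y' tm) = 0"
  proof (rule DERIV_local_max[OF deriv[OF assms(1,2)]])
    show "0 < min (tm - t0) (t1 - tm)"
      using assms(1,2) by simp
    show "\<forall>t. \<bar>tm - t\<bar> < min (tm - t0) (t1 - tm) \<longrightarrow> X t ^ 2 + Y t ^ 2 \<le> X tm ^ 2 + Y tm ^ 2"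
      using max by (auto simp: abs_less_iff)
  qed
  then show perp: "X tm * X' tm + Y tm * Y' tm = 0"
    by simp
  have "2 * (X' tm * X' tm + X tm * X'' tm + (Y' tm * Y' tm + Y tm * Y'' tm)) \<le> 0"
    using perp max assms(1,2)
    by (intro DERIV_local_max_imp_second_deriv_nonpos[OF assms(1,2) deriv deriv']) auto
  then have "X' tm ^ 2 + Y' tm ^ 2 + X tm * X'' tm + Y tm * Y'' tm \<le> 0"
    by (simp add: power2_eq_square)
  then show "(1 / \<kappa>)\<^sup>2 \<le> X tm ^ 2 + Y tm ^ 2"
    using assms(1,2) perp speed_pos curvature_le curvature_pos
    by (intro inverse_curvature_le_norm_at_max) auto
qed

text \<open>If the distance from the origin had an interior maximum above \<open>\<rho>\<close>, it would be at
  least \<open>1 / \<kappa>\<close> there, and then stay so up to \<open>t1\<close>.\<close>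

lemma dist_le_on_arc:
  assumes "r * \<kappa> < 1" "0 \<le> \<rho>" "\<rho> \<le> r"
    and in_square: "\<And>t. t \<in> {t0..t1} \<Longrightarrow> \<bar>X t\<bar> \<le> r \<and> \<bar>Y t\<bar> \<le> r"
    and start: "X t0 ^ 2 + Y t0 ^ 2 \<le> \<rho>\<^sup>2" and finish: "X t1 ^ 2 + Y t1 ^ 2 \<le> \<rho>\<^sup>2"
    and t: "t \<in> {t0..t1}"
  shows "X t ^ 2 + Y t ^ 2 \<le> \<rho>\<^sup>2"
proof -
  have "continuous_on {t0..t1} (\<lambda>t. X t ^ 2 + Y t ^ 2)"
    using DERIV_continuous_on[OF deriv_X] DERIV_continuous_on[OF deriv_Y] by (intro continuous_intros)
  then obtain tm where tm: "tm \<in> {t0..t1}"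
    and max: "\<And>t. t \<in> {t0..t1} \<Longrightarrow> X t ^ 2 + Y t ^ 2 \<le> X tm ^ 2 + Y tm ^ 2"
    using continuous_attains_sup[of "{t0..t1}"] ordered by fastforce
  have "X tm ^ 2 + Y tm ^ 2 \<le> \<rho>\<^sup>2"
  proof (rule ccontr)
    assume above: "\<not> X tm ^ 2 + Y tm ^ 2 \<le> \<rho>\<^sup>2"
    then have "t0 < tm" "tm < t1"
      using tm start finish by (auto simp: le_less)
    then have "(1 / \<kappa>)\<^sup>2 \<le> X t1 ^ 2 + Y t1 ^ 2"
      using interior_max_dist_ge_radius[OF _ _ max] \<open>r * \<kappa> < 1\<close> in_square
      by (intro curvature_bounded_arc.far_point_stays_far[OF subarc[of tm t1]]) auto
    moreover have "r < 1 / \<kappa>"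
      using \<open>r * \<kappa> < 1\<close> curvature_pos by (simp add: field_simps)
    then have "\<rho>\<^sup>2 < (1 / \<kappa>)\<^sup>2"
      using \<open>0 \<le> \<rho>\<close> \<open>\<rho> \<le> r\<close> by (simp add: power_strict_mono)
    ultimately show False
      using finish by simp
  qed
  then show ?thesis
    using max[OF t] by simp
qed

end

lemma curvature_bounded_arc_trajectory:
  fixes \<gamma> \<gamma>' \<gamma>'' :: "real \<Rightarrow> real \<times> real" and x :: "real \<times> real"
  assumes "0 \<le> T"
    and deriv: "\<And>t. t \<in> {0..T} \<Longrightarrow> (\<gamma> has_vector_derivative \<gamma>' t) (at t within {0..T})"
    and deriv': "\<And>t. t \<in> {0..T} \<Longrightarrow> (\<gamma>' has_vector_derivative \<gamma>'' t) (at t within {0..T})"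
    and regular: "\<And>t. t \<in> {0..T} \<Longrightarrow> \<gamma>' t \<noteq> 0"
    and "0 < \<kappa>"
    and curvature: "\<And>t. t \<in> {0..T} \<Longrightarrow> curvature (\<gamma>' t) (\<gamma>'' t) \<le> \<kappa>"
  shows "curvature_bounded_arc (\<lambda>t. fst (\<gamma> t) - fst x) (\<lambda>t. snd (\<gamma> t) - snd x)
    (\<lambda>t. fst (\<gamma>' t)) (\<lambda>t. snd (\<gamma>' t)) (\<lambda>t. fst (\<gamma>'' t)) (\<lambda>t. snd (\<gamma>'' t)) 0 T \<kappa>"
proof
  fix t assume t: "t \<in> {0..T}"
  show "((\<lambda>t. fst (\<gamma> t) - fst x) has_real_derivative fst (\<gamma>' t)) (at t within {0..T})"
    using DERIV_diff[OF has_real_derivative_fst[OF deriv[OF t]] DERIV_const] by simp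
  show "((\<lambda>t. snd (\<gamma> t) - snd x) has_real_derivative snd (\<gamma>' t)) (at t within {0..T})"
    using DERIV_diff[OF has_real_derivative_snd[OF deriv[OF t]] DERIV_const] by simp
  show "((\<lambda>t. fst (\<gamma>' t)) has_real_derivative fst (\<gamma>'' t)) (at t within {0..T})"
    by (rule has_real_derivative_fst[OF deriv'[OF t]])
  show "((\<lambda>t. snd (\<gamma>' t)) has_real_derivative snd (\<gamma>'' t)) (at t within {0..T})"
    by (rule has_real_derivative_snd[OF deriv'[OF t]])
  have norm: "norm (\<gamma>' t) = sqrt (fst (\<gamma>' t) ^ 2 + snd (\<gamma>' t) ^ 2)"
    by (cases "\<gamma>' t") (simp add: norm_Pair)
  have "0 < norm (\<gamma>' t)"
    using regular[OF t] by simp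
  then show "0 < fst (\<gamma>' t) ^ 2 + snd (\<gamma>' t) ^ 2"
    unfolding norm by simp
  show "\<bar>fst (\<gamma>' t) * snd (\<gamma>'' t) - snd (\<gamma>' t) * fst (\<gamma>'' t)\<bar>
      \<le> \<kappa> * sqrt (fst (\<gamma>' t) ^ 2 + snd (\<gamma>' t) ^ 2) ^ 3"
    using curvature[OF t] \<open>0 < norm (\<gamma>' t)\<close> unfolding curvature_def norm[symmetric]
    by (simp add: divide_le_eq)
qed (use assms in auto)

lemma trajectory_stays_in_disk:
  fixes \<gamma> \<gamma>' \<gamma>'' :: "real \<Rightarrow> real \<times> real" and x :: "real \<times> real"
  assumes deriv: "\<And>t. t \<in> {0..T} \<Longrightarrow> (\<gamma> has_vector_derivative \<gamma>' t) (at t within {0..T})"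
    and deriv': "\<And>t. t \<in> {0..T} \<Longrightarrow> (\<gamma>' has_vector_derivative \<gamma>'' t) (at t within {0..T})"
    and regular: "\<And>t. t \<in> {0..T} \<Longrightarrow> \<gamma>' t \<noteq> 0"
    and "0 < \<kappa>"
    and curvature: "\<And>t. t \<in> {0..T} \<Longrightarrow> curvature (\<gamma>' t) (\<gamma>'' t) \<le> \<kappa>"
    and "r < 1 / \<kappa>" "0 \<le> \<rho>" "\<rho> \<le> r"
    and subinterval: "0 \<le> s0" "s0 \<le> s1" "s1 \<le> T"
    and in_square: "\<gamma> ` {s0..s1} \<subseteq> square r x"
    and ends: "\<gamma> s0 \<in> disk \<rho> x" "\<gamma> s1 \<in> disk \<rho> x"
  shows "\<gamma> ` {s0..s1} \<subseteq> disk \<rho> x"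
proof -
  interpret curvature_bounded_arc "\<lambda>t. fst (\<gamma> t) - fst x" "\<lambda>t. snd (\<gamma> t) - snd x"
      "\<lambda>t. fst (\<gamma>' t)" "\<lambda>t. snd (\<gamma>' t)" "\<lambda>t. fst (\<gamma>'' t)" "\<lambda>t. snd (\<gamma>'' t)" s0 s1 \<kappa>
    by (rule curvature_bounded_arc.subarc[OF curvature_bounded_arc_trajectory[OF _ deriv deriv' regular
          \<open>0 < \<kappa>\<close> curvature]]) (use subinterval in auto)
  show ?thesis
  proof
    fix y assume "y \<in> \<gamma> ` {s0..s1}"
    then obtain t where t: "t \<in> {s0..s1}" and y: "y = \<gamma> t"
      by auto
    have "(fst (\<gamma> t) - fst x)\<^sup>2 + (snd (\<gamma> t) - snd x)\<^sup>2 \<le> \<rho>\<^sup>2"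
    proof (rule dist_le_on_arc[OF _ \<open>0 \<le> \<rho>\<close> \<open>\<rho> \<le> r\<close> _ _ _ t])
      show "r * \<kappa> < 1"
        using \<open>r < 1 / \<kappa>\<close> \<open>0 < \<kappa>\<close> by (simp add: field_simps)
      show "\<bar>fst (\<gamma> u) - fst x\<bar> \<le> r \<and> \<bar>snd (\<gamma> u) - snd x\<bar> \<le> r" if "u \<in> {s0..s1}" for u
        using in_square that by (auto simp: square_def image_subset_iff)
    qed (use ends in \<open>simp_all add: disk_def\<close>)
    then show "y \<in> disk \<rho> x"
      by (simp add: disk_def y)
  qed
qed

lemma closed_disk: "closed (disk r x)"
  unfolding disk_def by (intro closed_Collect_le continuous_intros)

lemma closed_square: "closed (square r x)"
  unfolding square_def by (intro closed_Collect_le continuous_intros)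

lemma disk_subset_square:
  assumes "0 \<le> r"
  shows "disk r x \<subseteq> square r x"
proof
  fix y assume "y \<in> disk r x"
  then have "(fst y - fst x)\<^sup>2 \<le> r\<^sup>2" "(snd y - snd x)\<^sup>2 \<le> r\<^sup>2"
    by (auto simp: disk_def intro: order_trans[rotated])
  then show "y \<in> square r x"
    using assms abs_le_square_iff[of _ r] by (simp add: square_def)
qed

lemma square_subset_disk:
  assumes "0 \<le> r" "sqrt 2 * r \<le> r'"
  shows "square r x \<subseteq> disk r' x"
proof
  fix y assume "y \<in> square r x"
  then have "(fst y - fst x)\<^sup>2 \<le> r\<^sup>2" "(snd y - snd x)\<^sup>2 \<le> r\<^sup>2"
    using assms(1) abs_le_square_iff[of _ r] by (simp_all add: square_def)
  then have "(fst y - fst x)\<^sup>2 + (snd y - snd x)\<^sup>2 \<le> (sqrt 2 * r)\<^sup>2"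
    by (simp add: power_mult_distrib)
  also have "\<dots> \<le> r'\<^sup>2"
    using assms by (intro power_mono[where n = 2]) simp_all
  finally show "y \<in> disk r' x"
    by (simp add: disk_def)
qed

lemma square_mono: "r \<le> r' \<Longrightarrow> square r x \<subseteq> square r' x"
  unfolding square_def by auto

lemma trace_in_mono: "K \<subseteq> K' \<Longrightarrow> trace_in \<gamma> T K a b \<Longrightarrow> trace_in \<gamma> T K' a b"
  unfolding trace_in_def by blast

lemma maxint_trace_in: "(a, b) \<in> maxint \<gamma> T K \<Longrightarrow> trace_in \<gamma> T K a b"
  unfolding maxint_def by blast

lemma maxint_maximal:
  "(a, b) \<in> maxint \<gamma> T K \<Longrightarrow> trace_in \<gamma> T K a' b' \<Longrightarrow> {a..b} \<subseteq> {a'..b'} \<Longrightarrow> a' = a \<and> b' = b"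
  unfolding maxint_def by blast

lemma trace_in_Un:
  assumes "trace_in \<gamma> T K a b" "trace_in \<gamma> T K a' b'" "c \<in> {a..b}" "c \<in> {a'..b'}"
  shows "trace_in \<gamma> T K (min a a') (max b b')"
proof -
  have "{min a a'..max b b'} \<subseteq> {a..b} \<union> {a'..b'}"
    using assms(3,4) by auto
  then show ?thesis
    using assms(1,2) unfolding trace_in_def by (auto simp: image_subset_iff)
qed

lemma maxint_absorbs:
  assumes "(a, b) \<in> maxint \<gamma> T K" "trace_in \<gamma> T K a' b'" "c \<in> {a..b}" "c \<in> {a'..b'}"
  shows "a \<le> a' \<and> b' \<le> b"
proof -
  have "trace_in \<gamma> T K (min a a') (max b b')"
    using trace_in_Un[OF maxint_trace_in[OF assms(1)] assms(2-4)] .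
  then have "min a a' = a \<and> max b b' = b"
    using maxint_maximal[OF assms(1)] by force
  then show ?thesis
    by linarith
qed

text \<open>The maximal intervals are the connected components of \<open>{t \<in> [0, T]. \<gamma> t \<in> K}\<close>.\<close>

lemma maxint_covers_trace:
  assumes "closed K" and cont: "continuous_on {0..T} \<gamma>" and trace: "trace_in \<gamma> T K a' b'"
  shows "\<exists>a b. (a, b) \<in> maxint \<gamma> T K \<and> a \<le> a' \<and> b' \<le> b"
proof -
  define E where "E = {0..T} \<inter> \<gamma> -` K"
  define C where "C = connected_component_set E a'"
  have "{a'..b'} \<subseteq> E"
    using trace by (auto simp: trace_in_def E_def)
  then have sub: "{a'..b'} \<subseteq> C"
    using trace unfolding C_def by (intro connected_component_maximal) (auto simp: trace_in_def)
  have "closed E"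
    unfolding E_def by (rule continuous_closed_preimage[OF cont closed_atLeastAtMost \<open>closed K\<close>])
  then have "compact C"
    unfolding C_def using connected_component_subset[of E a']
    by (metis E_def bounded_Int bounded_closed_interval bounded_subset closed_connected_component
        compact_eq_bounded_closed)
  then obtain a b where C: "C = {a..b}"
    using connected_compact_interval_1 C_def by blast
  have "a' \<in> {a..b}"
    using sub trace C by (auto simp: trace_in_def)
  have "trace_in \<gamma> T K a b"
    using C \<open>a' \<in> {a..b}\<close> connected_component_subset[of E a']
    by (auto simp: trace_in_def E_def C_def image_subset_iff)
  moreover have "a'' = a \<and> b'' = b" if "trace_in \<gamma> T K a'' b''" "{a..b} \<subseteq> {a''..b''}" for a'' b''
  proof -
    have "{a''..b''} \<subseteq> C"
      unfolding C_def
      using that \<open>a' \<in> {a..b}\<close> by (intro connected_component_maximal) (auto simp: trace_in_def E_def)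
    then have "{a''..b''} = {a..b}"
      using that(2) C by auto
    then show ?thesis
      using \<open>a' \<in> {a..b}\<close> by (simp add: Icc_eq_Icc)
  qed
  ultimately have "(a, b) \<in> maxint \<gamma> T K"
    unfolding maxint_def by blast
  moreover have "a \<le> a'" "b' \<le> b"
    using sub C trace by (auto simp: trace_in_def)
  ultimately show ?thesis
    by blast
qed

lemma maxint_eq_if_bridged:
  assumes "(a, b) \<in> maxint \<gamma> T K" "(a', b') \<in> maxint \<gamma> T K" "{a..b} \<union> {a'..b'} \<subseteq> {p..q}"
    and bridge: "\<And>s0 s1. p \<le> s0 \<Longrightarrow> s0 \<le> s1 \<Longrightarrow> s1 \<le> q \<Longrightarrow> \<gamma> s0 \<in> K \<Longrightarrow> \<gamma> s1 \<in> K \<Longrightarrow>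
      \<gamma> ` {s0..s1} \<subseteq> K"
  shows "(a, b) = (a', b')"
proof -
  have no_gap: "\<not> b1 < a2"
    if I: "(a1, b1) \<in> maxint \<gamma> T K" and J: "(a2, b2) \<in> maxint \<gamma> T K"
      and sub: "{a1..b1} \<union> {a2..b2} \<subseteq> {p..q}" for a1 b1 a2 b2
  proof
    assume gap: "b1 < a2"
    have I': "trace_in \<gamma> T K a1 b1" and J': "trace_in \<gamma> T K a2 b2"
      using I J by (auto dest: maxint_trace_in)
    have "\<gamma> ` {b1..a2} \<subseteq> K"
      using sub gap I' J' by (intro bridge) (auto simp: trace_in_def)
    then have "trace_in \<gamma> T K b1 a2"
      using I' J' gap by (auto simp: trace_in_def)
    then have "trace_in \<gamma> T K (min a1 b1) (max b1 a2)"
      using I' by (intro trace_in_Un[of _ _ _ a1 b1 b1 a2 b1]) (auto simp: trace_in_def)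
    then have "trace_in \<gamma> T K a1 a2"
      using I' gap by (simp add: trace_in_def)
    then have "trace_in \<gamma> T K (min a1 a2) (max a2 b2)"
      using J' by (intro trace_in_Un[of _ _ _ a1 a2 a2 b2 a2]) (auto simp: trace_in_def)
    then have "trace_in \<gamma> T K a1 b2"
      using I' J' gap by (simp add: trace_in_def)
    then show False
      using maxint_maximal[OF I, of a1 b2] I' J' gap by (auto simp: trace_in_def)
  qed
  have "a \<le> b" "a' \<le> b'"
    using assms(1,2) by (auto dest: maxint_trace_in simp: trace_in_def)
  then have "max a a' \<in> {a..b}" "max a a' \<in> {a'..b'}"
    using no_gap[OF assms(1,2,3)] no_gap[OF assms(2,1)] assms(3) by auto
  then show ?thesis
    using maxint_absorbs[OF assms(1) maxint_trace_in[OF assms(2)]]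
      maxint_absorbs[OF assms(2) maxint_trace_in[OF assms(1)]] by force
qed

lemma ecard_le_if_inj_on:
  assumes "inj_on f A" "f ` A \<subseteq> B"
  shows "ecard A \<le> ecard B"
proof (cases "finite B")
  case True
  then have "finite A"
    using assms finite_imageD finite_subset by blast
  then show ?thesis
    using card_inj_on_le[OF assms True] True by (simp add: ecard_def)
qed (simp add: ecard_def)

lemma robust_rel_iff:
  "(I, J) \<in> robust_rel \<gamma> T r1 r2 x \<longleftrightarrow>
    I \<in> maxint \<gamma> T (square r1 x) \<and> J \<in> maxint \<gamma> T (square r1 x) \<and>
    (\<exists>p q. (p, q) \<in> maxint \<gamma> T (square r2 x) \<and> {fst I..snd I} \<union> {fst J..snd J} \<subseteq> {p..q})"
  by (cases I; cases J) (auto simp: robust_rel_def)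

lemma equiv_robust_rel:
  assumes cont: "continuous_on {0..T} \<gamma>" and "r1 \<le> r2"
  shows "equiv (maxint \<gamma> T (square r1 x)) (robust_rel \<gamma> T r1 r2 x)"
proof (rule equivI)
  show "robust_rel \<gamma> T r1 r2 x \<subseteq> maxint \<gamma> T (square r1 x) \<times> maxint \<gamma> T (square r1 x)"
  proof (rule subrelI)
    fix I J assume "(I, J) \<in> robust_rel \<gamma> T r1 r2 x"
    then show "(I, J) \<in> maxint \<gamma> T (square r1 x) \<times> maxint \<gamma> T (square r1 x)"
      unfolding robust_rel_iff by blast
  qed
  show "refl_on (maxint \<gamma> T (square r1 x)) (robust_rel \<gamma> T r1 r2 x)"
  proof (rule refl_onI)
    fix I assume I: "I \<in> maxint \<gamma> T (square r1 x)"
    then have "trace_in \<gamma> T (square r2 x) (fst I) (snd I)"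
      using square_mono[OF \<open>r1 \<le> r2\<close>] by (intro trace_in_mono[OF _ maxint_trace_in]) auto
    then obtain p q where "(p, q) \<in> maxint \<gamma> T (square r2 x)" "p \<le> fst I" "snd I \<le> q"
      using maxint_covers_trace[OF closed_square cont] by blast
    then show "(I, I) \<in> robust_rel \<gamma> T r1 r2 x"
      unfolding robust_rel_iff using I by auto
  qed
  show "sym (robust_rel \<gamma> T r1 r2 x)"
  proof (rule symI)
    fix I J assume "(I, J) \<in> robust_rel \<gamma> T r1 r2 x"
    then show "(J, I) \<in> robust_rel \<gamma> T r1 r2 x"
      unfolding robust_rel_iff by (metis sup_commute)
  qed
  show "trans (robust_rel \<gamma> T r1 r2 x)"
  proof (rule transI)
    fix I J L assume "(I, J) \<in> robust_rel \<gamma> T r1 r2 x" "(J, L) \<in> robust_rel \<gamma> T r1 r2 x"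
    then obtain p q p' q' where J: "J \<in> maxint \<gamma> T (square r1 x)"
      and pq: "(p, q) \<in> maxint \<gamma> T (square r2 x)" "{fst I..snd I} \<union> {fst J..snd J} \<subseteq> {p..q}"
      and pq': "(p', q') \<in> maxint \<gamma> T (square r2 x)" "{fst J..snd J} \<union> {fst L..snd L} \<subseteq> {p'..q'}"
      and IL: "I \<in> maxint \<gamma> T (square r1 x)" "L \<in> maxint \<gamma> T (square r1 x)"
      unfolding robust_rel_iff by blast
    have "fst J \<le> snd J"
      using maxint_trace_in[of "fst J" "snd J"] J by (simp add: trace_in_def)
    then have "p \<le> p' \<and> q' \<le> q"
      using pq(2) pq'(2) by (intro maxint_absorbs[OF pq(1) maxint_trace_in[OF pq'(1)], of "fst J"]) auto
    then have "{fst I..snd I} \<union> {fst L..snd L} \<subseteq> {p..q}"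
      using pq(2) pq'(2) by fastforce
    then show "(I, L) \<in> robust_rel \<gamma> T r1 r2 x"
      unfolding robust_rel_iff using pq(1) IL by blast
  qed
qed

lemma le_sqrt_2_mult: "0 \<le> r \<Longrightarrow> r \<le> sqrt 2 * r"
  using mult_right_mono[of 1 "sqrt 2" r] real_le_rsqrt[of 1 2] by simp

lemma maxint_disk_eq_if_robust_rel:
  assumes no_excursion: "\<And>s0 s1. 0 \<le> s0 \<Longrightarrow> s0 \<le> s1 \<Longrightarrow> s1 \<le> T \<Longrightarrow> \<gamma> ` {s0..s1} \<subseteq> square r2 x \<Longrightarrow>
      \<gamma> s0 \<in> disk r1 x \<Longrightarrow> \<gamma> s1 \<in> disk r1 x \<Longrightarrow> \<gamma> ` {s0..s1} \<subseteq> disk r1 x"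
    and I: "I \<in> maxint \<gamma> T (disk r1 x)" and I': "I' \<in> maxint \<gamma> T (disk r1 x)"
    and "(J, J') \<in> robust_rel \<gamma> T r1 r2 x"
    and "{fst I..snd I} \<subseteq> {fst J..snd J}" "{fst I'..snd I'} \<subseteq> {fst J'..snd J'}"
  shows "I = I'"
proof -
  obtain p q where pq: "(p, q) \<in> maxint \<gamma> T (square r2 x)"
    and "{fst J..snd J} \<union> {fst J'..snd J'} \<subseteq> {p..q}"
    using \<open>(J, J') \<in> robust_rel \<gamma> T r1 r2 x\<close> unfolding robust_rel_iff by blast
  then have sub: "{fst I..snd I} \<union> {fst I'..snd I'} \<subseteq> {p..q}"
    using assms(5,6) by blast
  have "(fst I, snd I) = (fst I', snd I')"
  proof (rule maxint_eq_if_bridged[OF _ _ sub])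
    show "(fst I, snd I) \<in> maxint \<gamma> T (disk r1 x)" "(fst I', snd I') \<in> maxint \<gamma> T (disk r1 x)"
      using I I' by simp_all
    fix s0 s1 assume "p \<le> s0" "s0 \<le> s1" "s1 \<le> q" "\<gamma> s0 \<in> disk r1 x" "\<gamma> s1 \<in> disk r1 x"
    moreover have "trace_in \<gamma> T (square r2 x) p q"
      using pq by (rule maxint_trace_in)
    ultimately show "\<gamma> ` {s0..s1} \<subseteq> disk r1 x"
      by (intro no_excursion) (auto simp: trace_in_def)
  qed
  then show ?thesis
    by (simp add: prod_eq_iff)
qed

lemma robust_rel_if_in_disk_interval:
  assumes cont: "continuous_on {0..T} \<gamma>" and "0 \<le> r2"
    and "I \<in> maxint \<gamma> T (square r1 x)" "I' \<in> maxint \<gamma> T (square r1 x)"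
    and H: "H \<in> maxint \<gamma> T (disk r2 x)"
    and cover: "{fst I..snd I} \<union> {fst I'..snd I'} \<subseteq> {fst H..snd H}"
  shows "(I, I') \<in> robust_rel \<gamma> T r1 r2 x"
proof -
  have "trace_in \<gamma> T (disk r2 x) (fst H) (snd H)"
    using H maxint_trace_in[of "fst H" "snd H"] by simp
  then have "trace_in \<gamma> T (square r2 x) (fst H) (snd H)"
    by (rule trace_in_mono[OF disk_subset_square[OF \<open>0 \<le> r2\<close>]])
  then obtain p q where "(p, q) \<in> maxint \<gamma> T (square r2 x)" "p \<le> fst H" "snd H \<le> q"
    using maxint_covers_trace[OF closed_square cont] by blast
  then show ?thesis
    unfolding robust_rel_iff using assms(3,4) cover by fastforce
qed

lemma count_ball_le_count_robust_square:
  assumes cont: "continuous_on {0..T} \<gamma>" and "0 \<le> r1" "r1 \<le> r2"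
    and no_excursion: "\<And>s0 s1. 0 \<le> s0 \<Longrightarrow> s0 \<le> s1 \<Longrightarrow> s1 \<le> T \<Longrightarrow> \<gamma> ` {s0..s1} \<subseteq> square r2 x \<Longrightarrow>
      \<gamma> s0 \<in> disk r1 x \<Longrightarrow> \<gamma> s1 \<in> disk r1 x \<Longrightarrow> \<gamma> ` {s0..s1} \<subseteq> disk r1 x"
  shows "count_ball \<gamma> T r1 x \<le> count_robust_square \<gamma> T r1 r2 x"
proof -
  let ?B = "maxint \<gamma> T (disk r1 x)" and ?S = "maxint \<gamma> T (square r1 x)"
    and ?R = "robust_rel \<gamma> T r1 r2 x"
  have "\<exists>J\<in>?S. {fst I..snd I} \<subseteq> {fst J..snd J}" if "I \<in> ?B" for I
  proof -
    have "trace_in \<gamma> T (square r1 x) (fst I) (snd I)"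
      using that disk_subset_square[OF \<open>0 \<le> r1\<close>] by (intro trace_in_mono[OF _ maxint_trace_in]) auto
    then obtain a b where "(a, b) \<in> ?S" "a \<le> fst I" "snd I \<le> b"
      using maxint_covers_trace[OF closed_square cont] by blast
    then show ?thesis
      by (intro bexI[of _ "(a, b)"]) auto
  qed
  then obtain c where c: "\<And>I. I \<in> ?B \<Longrightarrow> c I \<in> ?S \<and> {fst I..snd I} \<subseteq> {fst (c I)..snd (c I)}"
    by metis
  have equiv: "equiv ?S ?R"
    by (rule equiv_robust_rel[OF cont \<open>r1 \<le> r2\<close>])
  have "inj_on (\<lambda>I. ?R `` {c I}) ?B"
  proof (rule inj_onI)
    fix I I' assume I: "I \<in> ?B" and I': "I' \<in> ?B" and "?R `` {c I} = ?R `` {c I'}"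
    then have "(c I, c I') \<in> ?R"
      using c equiv_class_eq_iff[OF equiv] by blast
    then show "I = I'"
      using c[OF I] c[OF I'] by (intro maxint_disk_eq_if_robust_rel[OF no_excursion I I']) auto
  qed
  moreover have "(\<lambda>I. ?R `` {c I}) ` ?B \<subseteq> ?S // ?R"
    using c by (auto intro: quotientI)
  ultimately show ?thesis
    unfolding count_ball_def count_robust_square_def by (rule ecard_le_if_inj_on)
qed

lemma count_robust_square_le_count_ball:
  assumes cont: "continuous_on {0..T} \<gamma>" and "0 \<le> r1" "sqrt 2 * r1 \<le> r2"
  shows "count_robust_square \<gamma> T r1 r2 x \<le> count_ball \<gamma> T r2 x"
proof -
  let ?S = "maxint \<gamma> T (square r1 x)" and ?R = "robust_rel \<gamma> T r1 r2 x"
    and ?D = "maxint \<gamma> T (disk r2 x)"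
  have "r1 \<le> r2" "0 \<le> r2"
    using le_sqrt_2_mult[OF assms(2)] assms(2,3) by linarith+
  have equiv: "equiv ?S ?R"
    by (rule equiv_robust_rel[OF cont \<open>r1 \<le> r2\<close>])
  have "\<exists>H\<in>?D. \<exists>I\<in>C. {fst I..snd I} \<subseteq> {fst H..snd H}" if "C \<in> ?S // ?R" for C
  proof -
    from that obtain I where C: "C = ?R `` {I}" and I: "I \<in> ?S"
      by (rule quotientE)
    have "trace_in \<gamma> T (disk r2 x) (fst I) (snd I)"
      using I square_subset_disk[OF assms(2,3)] by (intro trace_in_mono[OF _ maxint_trace_in]) auto
    then obtain a b where ab: "(a, b) \<in> ?D" "a \<le> fst I" "snd I \<le> b"
      using maxint_covers_trace[OF closed_disk cont] by blast
    moreover have "I \<in> C"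
      using C equiv_class_self[OF equiv I] by simp
    ultimately show ?thesis
      by (intro bexI[OF _ ab(1)] bexI[of _ I]) auto
  qed
  then obtain g where g: "\<And>C. C \<in> ?S // ?R \<Longrightarrow> g C \<in> ?D \<and> (\<exists>I\<in>C. {fst I..snd I} \<subseteq> {fst (g C)..snd (g C)})"
    by metis
  have "inj_on g (?S // ?R)"
  proof (rule inj_onI)
    fix C C' assume C: "C \<in> ?S // ?R" and C': "C' \<in> ?S // ?R" and "g C = g C'"
    then obtain I I' where "I \<in> C" "I' \<in> C'"
      and "{fst I..snd I} \<union> {fst I'..snd I'} \<subseteq> {fst (g C)..snd (g C)}"
      using g[OF C] g[OF C'] by fastforce
    moreover have "I \<in> ?S" "I' \<in> ?S"
      using in_quotient_imp_subset[OF equiv] C C' \<open>I \<in> C\<close> \<open>I' \<in> C'\<close> by blast+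
    ultimately have "(I, I') \<in> ?R"
      using robust_rel_if_in_disk_interval[OF cont \<open>0 \<le> r2\<close>] g[OF C] by blast
    then show "C = C'"
      by (rule quotient_eqI[OF equiv C C' \<open>I \<in> C\<close> \<open>I' \<in> C'\<close>])
  qed
  moreover have "g ` (?S // ?R) \<subseteq> ?D"
    using g by blast
  ultimately show ?thesis
    unfolding count_ball_def count_robust_square_def by (rule ecard_le_if_inj_on)
qed

theorem theorem1:
  fixes \<gamma> \<gamma>' \<gamma>'' :: "real \<Rightarrow> real \<times> real" and T \<kappa>max r1 r2 :: real
  assumes "0 < T"
    and "\<And>t. t \<in> {0..T} \<Longrightarrow> (\<gamma> has_vector_derivative \<gamma>' t) (at t within {0..T})"
    and "\<And>t. t \<in> {0..T} \<Longrightarrow> (\<gamma>' has_vector_derivative \<gamma>'' t) (at t within {0..T})"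
    and "continuous_on {0..T} \<gamma>''"
    and "\<And>t. t \<in> {0..T} \<Longrightarrow> \<gamma>' t \<noteq> 0"
    and "0 < \<kappa>max"
    and "\<And>t. t \<in> {0..T} \<Longrightarrow> curvature (\<gamma>' t) (\<gamma>'' t) \<le> \<kappa>max"
    and "0 < r1"
    and "sqrt 2 * r1 \<le> r2" and "r2 < 1 / \<kappa>max"
  shows "count_ball \<gamma> T r1 x \<le> count_robust_square \<gamma> T r1 r2 x \<and>
         count_robust_square \<gamma> T r1 r2 x \<le> count_ball \<gamma> T r2 x"
proof -
  have cont: "continuous_on {0..T} \<gamma>"
    unfolding continuous_on_eq_continuous_within using assms(2) by (blast intro: has_vector_derivative_continuous)
  have "0 \<le> r1"
    using assms(8) by simp
  then have "r1 \<le> r2"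
    using le_sqrt_2_mult assms(9) order_trans by blast
  have "\<gamma> ` {s0..s1} \<subseteq> disk r1 x"
    if "0 \<le> s0" "s0 \<le> s1" "s1 \<le> T" "\<gamma> ` {s0..s1} \<subseteq> square r2 x" "\<gamma> s0 \<in> disk r1 x" "\<gamma> s1 \<in> disk r1 x"
    for s0 s1
    using trajectory_stays_in_disk[OF assms(2,3,5,6,7,10) \<open>0 \<le> r1\<close> \<open>r1 \<le> r2\<close> that] .
  then show ?thesis
    using count_ball_le_count_robust_square[OF cont \<open>0 \<le> r1\<close> \<open>r1 \<le> r2\<close>]
      count_robust_square_le_count_ball[OF cont \<open>0 \<le> r1\<close> assms(9)] by blast
qed

end
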